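(* Assume that $\{A_0,A_1\}$ is a partition of $\mathbb R$ which is a $2$-S-covering. Then at least one of the sets $A_0,A_1$ is a $2$-covering.
   Context: A family $\mathcal A$ of pairwise disjoint subsets of $\mathbb R$ is a $\kappa$-S-covering if $|\mathcal A|=\kappa$ and for every $F\subseteq\mathbb R$ with $|F|=\kappa$ there is $t\in\mathbb R$ such that $F+t\subseteq\bigcup\mathcal A$ and $|(F+t)\cap A|=1$ for every $A\in\mathcal A$. A set $A\subseteq\mathbb R$ is a $2$-covering if for every $B\subseteq\mathbb R$ with $|B|=2$ there is $x\in\mathbb R$ with $B+x\subseteq A$. *)

theory Defs
  imports "HOL-Analysis.Analysis"
begin

definition translate :: "real set \<Rightarrow> real \<Rightarrow> real set" where
  "translate F t = (\<lambda>x. x + t) ` F"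

definition S_covering :: "nat \<Rightarrow> real set set \<Rightarrow> bool" where
  "S_covering k \<A> \<longleftrightarrow>
     (\<forall>A\<in>\<A>. \<forall>B\<in>\<A>. A \<noteq> B \<longrightarrow> A \<inter> B = {}) \<and>
     finite \<A> \<and> card \<A> = k \<and>
     (\<forall>F. finite F \<and> card F = k \<longrightarrow>
        (\<exists>t. translate F t \<subseteq> \<Union>\<A> \<and>
             (\<forall>A\<in>\<A>. card (translate F t \<inter> A) = 1)))"

definition two_covering :: "real set \<Rightarrow> bool" where
  "two_covering A \<longleftrightarrow>
     (\<forall>B. finite B \<and> card B = 2 \<longrightarrow> (\<exists>x. translate B x \<subseteq> A))"

end

theory Submission
  imports Defs
begin

text \<open>If neither part is a 2-covering, each part \<open>A\<^sub>i\<close> avoids some distance \<open>d\<^sub>i > 0\<close>.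
  Then \<open>y \<in> A\<^sub>0\<close> forces \<open>y + d\<^sub>0 \<in> A\<^sub>1\<close> and hence \<open>y + d\<^sub>0 + d\<^sub>1 \<in> A\<^sub>0\<close>, and symmetrically,
  so \<open>A\<^sub>0\<close> is periodic with period \<open>D = d\<^sub>0 + d\<^sub>1\<close>. But the 2-S-covering property translates
  \<open>{0, D}\<close> so that exactly one of its points lies in \<open>A\<^sub>0\<close>, contradicting periodicity.\<close>

lemma translate_doubleton: "translate {a, b} t = {a + t, b + t}"
  unfolding translate_def by auto

lemma not_two_covering_obtains_avoided_distance:
  assumes "\<not> two_covering A"
  obtains d :: real where "d > 0" "\<And>y. y \<in> A \<Longrightarrow> y + d \<notin> A"
proof -
  from assms obtain B where "finite B" "card B = 2" and B: "\<And>x. \<not> translate B x \<subseteq> A"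
    unfolding two_covering_def by blast
  then obtain a b where ab: "B = {a, b}" "a \<noteq> b"
    by (meson card_2_iff)
  show ?thesis
  proof (rule that)
    show "\<bar>b - a\<bar> > 0" using ab(2) by simp
    fix y
    assume "y \<in> A"
    moreover have "translate B (y - min a b) = {y, y + \<bar>b - a\<bar>}"
      unfolding ab translate_doubleton by (auto simp: min_def abs_if)
    ultimately show "y + \<bar>b - a\<bar> \<notin> A" using B[of "y - min a b"] by auto
  qed
qed

lemma periodic_if_avoided_distances:
  fixes A :: "real set"
  assumes "\<And>y. y \<in> A \<Longrightarrow> y + d0 \<notin> A" and "\<And>y. y \<notin> A \<Longrightarrow> y + d1 \<in> A"
  shows "y + (d0 + d1) \<in> A \<longleftrightarrow> y \<in> A"
proof
  assume "y \<in> A"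
  then have "y + d0 \<notin> A" by (rule assms(1))
  then show "y + (d0 + d1) \<in> A" using assms(2)[of "y + d0"] by (simp add: add.assoc)
next
  assume in_A: "y + (d0 + d1) \<in> A"
  show "y \<in> A"
  proof (rule ccontr)
    assume "y \<notin> A"
    then have "y + d1 \<in> A" by (rule assms(2))
    then have "y + d1 + d0 \<notin> A" by (rule assms(1))
    with in_A show False by (simp add: algebra_simps)
  qed
qed

lemma S_covering_2_obtains_split_pair:
  assumes "S_covering 2 {A0, A1}" and "D \<noteq> 0"
  obtains t where "card ({t, t + D} \<inter> A0) = 1"
proof -
  have "finite {0, D} \<and> card {0, D} = 2" using assms(2) by auto
  moreover have "\<forall>F. finite F \<and> card F = 2 \<longrightarrow>
      (\<exists>t. translate F t \<subseteq> \<Union>{A0, A1} \<and> (\<forall>A\<in>{A0, A1}. card (translate F t \<inter> A) = 1))"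
    using assms(1) unfolding S_covering_def by (elim conjE)
  ultimately obtain t where "card (translate {0, D} t \<inter> A0) = 1"
    by (meson insertI1)
  then show ?thesis
    using that[of t] by (simp add: translate_doubleton add.commute)
qed

theorem mainTheorem9:
  fixes A0 A1 :: "real set"
  assumes "A0 \<union> A1 = UNIV" and "A0 \<inter> A1 = {}"
    and "S_covering 2 {A0, A1}"
  shows "two_covering A0 \<or> two_covering A1"
proof (rule ccontr)
  assume "\<not> (two_covering A0 \<or> two_covering A1)"
  then obtain d0 d1 where "d0 > 0" "d1 > 0"
    and d0: "\<And>y. y \<in> A0 \<Longrightarrow> y + d0 \<notin> A0" and d1: "\<And>y. y \<in> A1 \<Longrightarrow> y + d1 \<notin> A1"
    by (meson not_two_covering_obtains_avoided_distance)
  have "A1 = - A0" using assms(1,2) by blast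
  then have periodic: "y + (d0 + d1) \<in> A0 \<longleftrightarrow> y \<in> A0" for y
    using d0 d1 by (intro periodic_if_avoided_distances) auto
  obtain t where "card ({t, t + (d0 + d1)} \<inter> A0) = 1"
    using S_covering_2_obtains_split_pair[OF assms(3)] \<open>d0 > 0\<close> \<open>d1 > 0\<close> by (metis add_pos_pos less_irrefl)
  moreover have "{t, t + (d0 + d1)} \<inter> A0 \<in> {{}, {t, t + (d0 + d1)}}"
    using periodic[of t] by auto
  ultimately show False using \<open>d0 > 0\<close> \<open>d1 > 0\<close> by auto
qed

end
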